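(* Let $\mathbbm{k}$ be a field, $n\ge 1$, $m\geq 0$, and $A_1,\dots,A_m\in\mathrm{Mat}_n(\mathbbm{k})$. Then $$\det P_m(A_1,\dots,A_m)=(-1)^{mn}\det Q_m(A_1,\dots,A_m).$$
   Context: For noncommuting variables $a_1,a_2,\dots$ define polynomials by $P_0=1$, $P_1(a_1)=a_1$, $P_m(a_1,\dots,a_m)=P_{m-1}(a_1,\dots,a_{m-1})a_m+P_{m-2}(a_1,\dots,a_{m-2})$, and $Q_0=1$, $Q_1(a_1)=-a_1$, $Q_m(a_1,\dots,a_m)=-Q_{m-1}(a_2,\dots,a_m)a_1+Q_{m-2}(a_3,\dots,a_m)$. (E.g. $P_2=1+a_1a_2$, $Q_2=1+a_2a_1$.) These are evaluated on matrices. *)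

theory Defs
  imports "HOL-Analysis.Analysis"
begin

text \<open>Continuant-type matrix polynomials. A list [A_1, ..., A_m] encodes the
arguments. P is defined by recursion at the end of the list, so we define an
auxiliary function on the reversed list.\<close>

fun P_rev :: "('a::comm_ring_1^'n^'n) list \<Rightarrow> 'a^'n^'n" where
  "P_rev [] = mat 1"
| "P_rev [a] = a"
| "P_rev (a # b # ys) = P_rev (b # ys) ** a + P_rev ys"

definition P :: "('a::comm_ring_1^'n^'n) list \<Rightarrow> 'a^'n^'n" where
  "P xs = P_rev (rev xs)"

fun Q :: "('a::comm_ring_1^'n^'n) list \<Rightarrow> 'a^'n^'n" where
  "Q [] = mat 1"
| "Q [a] = - a"
| "Q (a # b # xs) = - (Q (b # xs)) ** a + Q xs"

end

theory Submission
  imports Defs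
begin

text \<open>The continuant recursions are encoded by the 2n x 2n transfer matrices
  T(a) = [[a, 1], [1, 0]]: the product T(A_1) \<cdots> T(A_m) has upper-left block P_m, and its
  inverse, the product of the matrices T(a)\<inverse> = [[0, 1], [1, -a]] in reverse order, has
  lower-right block Q_m. Jacobi's complementary minor identity turns this into
  det P_m = det (T(A_1) \<cdots> T(A_m)) * det Q_m, and every T(a) has determinant (-1)^n.\<close>

lemma bij_betw_map_permutation_range:
  assumes "inj f"
  shows "bij_betw (map_permutation UNIV f) {q. q permutes UNIV} {p. p permutes range f}"
proof -
  have "map_permutation UNIV f = (\<lambda>q x. if x \<in> range f then f (q (inv_into UNIV f x)) else x)"
    by (simp add: fun_eq_iff map_permutation_def restrict_id_def)
  with bij_betw_permutations[of f UNIV "range f"] assms show ?thesis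
    by (simp add: bij_betw_def)
qed

lemma det_eq_det_reindex_identity_rows:
  fixes M :: "'a::comm_ring_1^'k::finite^'k" and f :: "'l::finite \<Rightarrow> 'k"
  assumes "inj f"
    and id_rows: "\<And>i j. i \<notin> range f \<Longrightarrow> M $ i $ j = (if j = i then 1 else 0)"
  shows "det M = det (\<chi> i j. M $ f i $ f j)"
proof -
  \<comment> \<open>Only permutations fixing every row outside the range of f contribute, and these are
    exactly the permutations of the index type of the submatrix, transported along f.\<close>
  let ?term = "\<lambda>p. of_int (sign p) * (\<Prod>i\<in>UNIV. M $ i $ p i)"
  let ?lift = "map_permutation UNIV f"
  have vanish: "?term p = 0" if "p \<in> {p. p permutes UNIV} - {p. p permutes range f}" for p
  proof -
    from that obtain i where "i \<notin> range f" "p i \<noteq> i"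
      by (auto simp: permutes_def)
    then have "M $ i $ p i = 0" using id_rows by simp
    then have "(\<Prod>i\<in>UNIV. M $ i $ p i) = 0" by (intro prod_zero) auto
    then show ?thesis by simp
  qed
  have "det M = (\<Sum>p\<in>{p. p permutes range f}. ?term p)"
    unfolding det_def
    by (rule sum.mono_neutral_right) (use vanish in \<open>auto intro: permutes_subset\<close>)
  also have "\<dots> = (\<Sum>q\<in>{q. q permutes (UNIV :: 'l set)}. ?term (?lift q))"
    using bij_betw_map_permutation_range[OF \<open>inj f\<close>] by (rule sum.reindex_bij_betw[symmetric])
  also have "\<dots> = (\<Sum>q\<in>{q. q permutes UNIV}. of_int (sign q) * (\<Prod>i\<in>UNIV. M $ f i $ f (q i)))"
  proof (rule sum.cong[OF refl])
    fix q :: "'l \<Rightarrow> 'l" assume "q \<in> {q. q permutes UNIV}"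
    then have q: "q permutes UNIV" by simp
    have lift_in: "?lift q (f i) = f (q i)" for i
      using \<open>inj f\<close> by (simp add: map_permutation_def restrict_id_def)
    have lift_out: "?lift q x = x" if "x \<notin> range f" for x
      using that by (simp add: map_permutation_def restrict_id_def)
    have "(\<Prod>x\<in>UNIV. M $ x $ ?lift q x) = (\<Prod>x\<in>range f. M $ x $ ?lift q x)"
      by (rule prod.mono_neutral_right) (auto simp: lift_out id_rows)
    also have "\<dots> = (\<Prod>i\<in>UNIV. M $ f i $ f (q i))"
      using \<open>inj f\<close> by (simp add: prod.reindex lift_in)
    finally show "?term (?lift q) = of_int (sign q) * (\<Prod>i\<in>UNIV. M $ f i $ f (q i))"
      using sign_map_permutation[of f UNIV q] \<open>inj f\<close> q by simp
  qed
  finally show ?thesis unfolding det_def by simp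
qed

lemma det_eq_det_reindex_identity_columns:
  fixes M :: "'a::comm_ring_1^'k::finite^'k" and f :: "'l::finite \<Rightarrow> 'k"
  assumes "inj f"
    and id_columns: "\<And>i j. j \<notin> range f \<Longrightarrow> M $ i $ j = (if i = j then 1 else 0)"
  shows "det M = det (\<chi> i j. M $ f i $ f j)"
proof -
  have "det (transpose M) = det (\<chi> i j. transpose M $ f i $ f j)"
    by (rule det_eq_det_reindex_identity_rows) (use assms in \<open>auto simp: transpose_def\<close>)
  also have "(\<chi> i j. transpose M $ f i $ f j) = transpose (\<chi> i j. M $ f i $ f j)"
    by (simp add: transpose_def)
  finally show ?thesis by simp
qed

lemma sum_UNIV_Plus:
  "(\<Sum>k\<in>(UNIV :: ('n::finite + 'm::finite) set). g k) = (\<Sum>i\<in>UNIV. g (Inl i)) + (\<Sum>j\<in>UNIV. g (Inr j))"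
  by (subst UNIV_Plus_UNIV [symmetric], subst sum.Plus) (auto simp: o_def)

definition block_matrix ::
  "'a^'n^'n \<Rightarrow> 'a^'m^'n \<Rightarrow> 'a^'n^'m \<Rightarrow> 'a^'m^'m \<Rightarrow> 'a^('n + 'm)^('n + 'm)" where
  "block_matrix A B C D =
    (\<chi> i j. case i of
        Inl i \<Rightarrow> (case j of Inl j \<Rightarrow> A $ i $ j | Inr j \<Rightarrow> B $ i $ j)
      | Inr i \<Rightarrow> (case j of Inl j \<Rightarrow> C $ i $ j | Inr j \<Rightarrow> D $ i $ j))"

lemma block_matrix_nth [simp]:
  "block_matrix A B C D $ Inl i $ Inl j = A $ i $ j"
  "block_matrix A B C D $ Inl i $ Inr j' = B $ i $ j'"
  "block_matrix A B C D $ Inr i' $ Inl j = C $ i' $ j"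
  "block_matrix A B C D $ Inr i' $ Inr j' = D $ i' $ j'"
  by (simp_all add: block_matrix_def)

lemma block_matrix_eq_iff:
  "block_matrix A B C D = block_matrix A' B' C' D' \<longleftrightarrow> A = A' \<and> B = B' \<and> C = C' \<and> D = D'"
  by (auto simp: vec_eq_iff split_sum_all)

lemma block_matrix_mult:
  fixes A :: "'a::semiring_1^'n::finite^'n" and D :: "'a^'m::finite^'m"
  shows "block_matrix A B C D ** block_matrix E F G H =
    block_matrix (A ** E + B ** G) (A ** F + B ** H) (C ** E + D ** G) (C ** F + D ** H)"
  by (simp add: vec_eq_iff split_sum_all matrix_matrix_mult_def sum_UNIV_Plus)

lemma mat_1_eq_block_matrix: "mat 1 = block_matrix (mat 1) 0 0 (mat 1)"
  by (simp add: vec_eq_iff split_sum_all mat_def)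

lemma det_block_matrix_lower_id:
  fixes A :: "'a::comm_ring_1^'n::finite^'n" and C :: "'a^'n^'m::finite"
  shows "det (block_matrix A 0 C (mat 1)) = det A"
proof -
  have "det (block_matrix A 0 C (mat 1)) = det (\<chi> i j. block_matrix A 0 C (mat 1) $ Inl i $ Inl j)"
  proof (rule det_eq_det_reindex_identity_columns)
    fix i j :: "'n + 'm"
    assume "j \<notin> range Inl"
    then obtain k where "j = Inr k" by (cases j) auto
    then show "block_matrix A 0 C (mat 1) $ i $ j = (if i = j then 1 else 0)"
      by (cases i) (simp_all add: mat_def)
  qed simp
  then show ?thesis by simp
qed

lemma det_block_matrix_upper_id:
  fixes D :: "'a::comm_ring_1^'m::finite^'m" and B :: "'a^'m^'n::finite"
  shows "det (block_matrix (mat 1) B 0 D) = det D"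
proof -
  have "det (block_matrix (mat 1) B 0 D) = det (\<chi> i j. block_matrix (mat 1) B 0 D $ Inr i $ Inr j)"
  proof (rule det_eq_det_reindex_identity_columns)
    fix i j :: "'n + 'm"
    assume "j \<notin> range Inr"
    then obtain k where "j = Inl k" by (cases j) auto
    then show "block_matrix (mat 1) B 0 D $ i $ j = (if i = j then 1 else 0)"
      by (cases i) (simp_all add: mat_def)
  qed simp
  then show ?thesis by simp
qed

lemma det_complementary_block:
  fixes A :: "'a::comm_ring_1^'n::finite^'n" and H :: "'a^'m::finite^'m"
  assumes "block_matrix A B C D ** block_matrix E F G H = mat 1"
  shows "det A = det (block_matrix A B C D) * det H"
proof -
  from assms have "A ** F + B ** H = 0" "C ** F + D ** H = mat 1"
    by (simp_all add: block_matrix_mult mat_1_eq_block_matrix block_matrix_eq_iff)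
  then have "block_matrix A B C D ** block_matrix (mat 1) F 0 H = block_matrix A 0 C (mat 1)"
    by (simp add: block_matrix_mult)
  then show ?thesis
    by (metis det_mul det_block_matrix_lower_id det_block_matrix_upper_id)
qed

lemma matrix_mul_uminus:
  fixes A B :: "'a::comm_ring_1^'n::finite^'n"
  shows "A ** (- B) = - (A ** B)" and "(- A) ** B = - (A ** B)"
  by (simp_all add: matrix_matrix_mult_def vec_eq_iff sum_negf)

lemma det_uminus_mat_1: "det (- mat 1 :: 'a::comm_ring_1^'n::finite^'n) = (-1) ^ CARD('n)"
proof -
  have "- mat 1 = (mat (-1) :: 'a^'n^'n)"
    by (simp add: vec_eq_iff mat_def)
  then show ?thesis
    by (simp add: det_diagonal mat_def)
qed

definition transfer :: "'a::comm_ring_1^'n::finite^'n \<Rightarrow> 'a^('n + 'n)^('n + 'n)" where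
  "transfer a = block_matrix a (mat 1) (mat 1) 0"

definition transfer_inv :: "'a::comm_ring_1^'n::finite^'n \<Rightarrow> 'a^('n + 'n)^('n + 'n)" where
  "transfer_inv a = block_matrix 0 (mat 1) (mat 1) (- a)"

fun transfer_prod :: "('a::comm_ring_1^'n::finite^'n) list \<Rightarrow> 'a^('n + 'n)^('n + 'n)" where
  "transfer_prod [] = mat 1"
| "transfer_prod (a # as) = transfer a ** transfer_prod as"

fun transfer_inv_prod :: "('a::comm_ring_1^'n::finite^'n) list \<Rightarrow> 'a^('n + 'n)^('n + 'n)" where
  "transfer_inv_prod [] = mat 1"
| "transfer_inv_prod (a # as) = transfer_inv_prod as ** transfer_inv a"

lemma transfer_mult_transfer_inv: "transfer a ** transfer_inv a = mat 1"
  by (simp add: transfer_def transfer_inv_def block_matrix_mult mat_1_eq_block_matrix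
      matrix_mul_uminus)

lemma transfer_prod_mult_transfer_inv_prod: "transfer_prod as ** transfer_inv_prod as = mat 1"
proof (induction as)
  case (Cons a as)
  have "transfer_prod (a # as) ** transfer_inv_prod (a # as) =
      transfer a ** (transfer_prod as ** transfer_inv_prod as) ** transfer_inv a"
    by (simp add: matrix_mul_assoc)
  then show ?case
    using Cons transfer_mult_transfer_inv by simp
qed simp

lemma transfer_prod_append: "transfer_prod (as @ [a]) = transfer_prod as ** transfer a"
  by (induction as) (simp_all add: matrix_mul_assoc)

lemma transfer_prod_rev_eq_block:
  "rs \<noteq> [] \<Longrightarrow> \<exists>C D. transfer_prod (rev rs) = block_matrix (P_rev rs) (P_rev (tl rs)) C D"
proof (induction rs rule: P_rev.induct)
  case (2 a)
  show ?case by (simp add: transfer_def) blast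
next
  case (3 a b ys)
  then obtain C D where "transfer_prod (rev (b # ys)) = block_matrix (P_rev (b # ys)) (P_rev ys) C D"
    by auto
  then have "transfer_prod (rev (a # b # ys)) =
      block_matrix (P_rev (b # ys)) (P_rev ys) C D ** transfer a"
    using transfer_prod_append[of "rev (b # ys)" a] by simp
  then show ?case
    by (simp add: transfer_def block_matrix_mult) blast
qed simp

lemma transfer_prod_eq_block: "\<exists>B C D. transfer_prod as = block_matrix (P as) B C D"
proof (cases "as = []")
  case True
  then show ?thesis
    using mat_1_eq_block_matrix by (auto simp: P_def)
next
  case False
  then show ?thesis
    using transfer_prod_rev_eq_block[of "rev as"] by (auto simp: P_def)
qed

lemma transfer_inv_prod_eq_block_tl:
  "as \<noteq> [] \<Longrightarrow> \<exists>A B. transfer_inv_prod as = block_matrix A B (Q (tl as)) (Q as)"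
proof (induction as rule: Q.induct)
  case (2 a)
  show ?case by (simp add: transfer_inv_def) blast
next
  case (3 a b xs)
  then obtain A B where "transfer_inv_prod (b # xs) = block_matrix A B (Q xs) (Q (b # xs))"
    by auto
  then show ?case
    by (simp add: transfer_inv_def block_matrix_mult matrix_mul_uminus add.commute) blast
qed simp

lemma transfer_inv_prod_eq_block: "\<exists>A B C. transfer_inv_prod as = block_matrix A B C (Q as)"
proof (cases "as = []")
  case True
  then show ?thesis
    using mat_1_eq_block_matrix by auto
next
  case False
  then show ?thesis
    using transfer_inv_prod_eq_block_tl by blast
qed

lemma det_transfer: "det (transfer (a :: 'a::comm_ring_1^'n::finite^'n)) = (-1) ^ CARD('n)"
proof -
  let ?I = "mat 1 :: 'a^'n^'n"
  have "block_matrix 0 ?I (- ?I) 0 =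
      block_matrix ?I 0 (- ?I) ?I ** block_matrix ?I ?I 0 ?I ** block_matrix ?I 0 (- ?I) ?I"
    by (simp add: block_matrix_mult matrix_mul_uminus)
  then have quarter_turn: "det (block_matrix 0 ?I (- ?I) 0) = 1"
    by (simp add: det_mul det_block_matrix_lower_id det_block_matrix_upper_id)
  have "block_matrix 0 ?I ?I 0 = block_matrix 0 ?I (- ?I) 0 ** block_matrix (- ?I) 0 0 ?I"
    by (simp add: block_matrix_mult matrix_mul_uminus)
  then have swap: "det (block_matrix 0 ?I ?I 0) = (-1) ^ CARD('n)"
    by (simp add: det_mul quarter_turn det_block_matrix_lower_id det_uminus_mat_1)
  have "transfer a = block_matrix ?I a 0 ?I ** block_matrix 0 ?I ?I 0"
    by (simp add: transfer_def block_matrix_mult)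
  then show ?thesis
    by (simp add: det_mul swap det_block_matrix_upper_id)
qed

lemma det_transfer_prod:
  "det (transfer_prod (as :: ('a::comm_ring_1^'n::finite^'n) list)) = ((-1) ^ CARD('n)) ^ length as"
  by (induction as) (simp_all add: det_mul det_transfer)

theorem mainTheorem2:
  fixes As :: "('a::field^'n::finite^'n) list"
  shows "det (P As) = (-1) ^ (length As * CARD('n)) * det (Q As)"
proof -
  obtain B C D where X: "transfer_prod As = block_matrix (P As) B C D"
    using transfer_prod_eq_block by blast
  obtain E F G where Y: "transfer_inv_prod As = block_matrix E F G (Q As)"
    using transfer_inv_prod_eq_block by blast
  have "det (P As) = det (transfer_prod As) * det (Q As)"
    using det_complementary_block transfer_prod_mult_transfer_inv_prod[of As]
    unfolding X Y by blast
  then show ?thesis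
    by (simp add: det_transfer_prod power_mult mult.commute)
qed

end
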